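(* Let $P$ be a set of $n$ points in general position in the plane such that the number $m$ of points of $P$ on the boundary of the convex hull of $P$ satisfies $m\geq 10$. Then $\mu(D(P))\geq\binom{n}{2}-5$.
   Context: General position means no three points collinear. $D(P)$ is the graph whose vertices are all closed segments with both endpoints in $P$, two adjacent iff disjoint. For a graph $G$ and $U\subseteq V(G)$, two distinct vertices $x,y\in U$ are $U$-mutually visible if $G$ contains a shortest $x$-$y$ path none of whose internal vertices lies in $U$; $U$ is a mutual-visibility set if every two distinct vertices of $U$ are $U$-mutually visible. $\mu(G)$ is the maximum size of a mutual-visibility set of $G$. *)

theory Defs
  imports "HOL-Analysis.Analysis"
begin

definition walk :: "'v set \<Rightarrow> ('v \<Rightarrow> 'v \<Rightarrow> bool) \<Rightarrow> 'v list \<Rightarrow> bool" where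
  "walk V E xs \<longleftrightarrow> xs \<noteq> [] \<and> set xs \<subseteq> V \<and>
     (\<forall>i. Suc i < length xs \<longrightarrow> E (xs ! i) (xs ! Suc i))"

text \<open>A shortest x-y path: an x-y walk of minimum length (such a walk is automatically a path).\<close>
definition shortest_path :: "'v set \<Rightarrow> ('v \<Rightarrow> 'v \<Rightarrow> bool) \<Rightarrow> 'v \<Rightarrow> 'v \<Rightarrow> 'v list \<Rightarrow> bool" where
  "shortest_path V E x y xs \<longleftrightarrow> walk V E xs \<and> hd xs = x \<and> last xs = y \<and>
     (\<forall>ys. walk V E ys \<and> hd ys = x \<and> last ys = y \<longrightarrow> length xs \<le> length ys)"

definition mutually_visible :: "'v set \<Rightarrow> ('v \<Rightarrow> 'v \<Rightarrow> bool) \<Rightarrow> 'v set \<Rightarrow> 'v \<Rightarrow> 'v \<Rightarrow> bool" where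
  "mutually_visible V E U x y \<longleftrightarrow>
     (\<exists>xs. shortest_path V E x y xs \<and> set (butlast (tl xs)) \<inter> U = {})"

definition mv_set :: "'v set \<Rightarrow> ('v \<Rightarrow> 'v \<Rightarrow> bool) \<Rightarrow> 'v set \<Rightarrow> bool" where
  "mv_set V E U \<longleftrightarrow> U \<subseteq> V \<and>
     (\<forall>x\<in>U. \<forall>y\<in>U. x \<noteq> y \<longrightarrow> mutually_visible V E U x y)"

definition mu :: "'v set \<Rightarrow> ('v \<Rightarrow> 'v \<Rightarrow> bool) \<Rightarrow> nat" where
  "mu V E = Max (card ` {U. mv_set V E U})"

definition general_position :: "(real^2) set \<Rightarrow> bool" where
  "general_position P \<longleftrightarrow>
     (\<forall>a\<in>P. \<forall>b\<in>P. \<forall>c\<in>P. a \<noteq> b \<and> a \<noteq> c \<and> b \<noteq> c \<longrightarrow> \<not> collinear {a, b, c})"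

definition seg_vertices :: "(real^2) set \<Rightarrow> (real^2) set set" where
  "seg_vertices P = {closed_segment a b | a b. a \<in> P \<and> b \<in> P \<and> a \<noteq> b}"

definition seg_adj :: "(real^2) set \<Rightarrow> (real^2) set \<Rightarrow> bool" where
  "seg_adj S T \<longleftrightarrow> S \<inter> T = {}"

end

theory Submission
  imports Defs
begin

text \<open>A hull edge ab of P, with all other points of P strictly to the left of the directed line
  ab, is disjoint from every segment that has neither a nor b as an endpoint. Following hull edges
  from a vertex of the convex hull, the walk can only close up after passing every point exposed by
  a linear functional, so with ten points on the boundary it visits ten distinct points and yields
  a set W of five pairwise vertex-disjoint hull edges. Two segments have at most four endpoints, so
  some edge of W is disjoint from both. Hence any two vertices of D(P) outside W are adjacent or
  have a common neighbour in W, and D(P) without W is a mutual-visibility set of size at least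
  C(n,2) - 5.\<close>

definition det2 :: "real^2 \<Rightarrow> real^2 \<Rightarrow> real" where
  "det2 a b = a$1 * b$2 - a$2 * b$1"

definition orient :: "real^2 \<Rightarrow> real^2 \<Rightarrow> real^2 \<Rightarrow> real" where
  "orient a b c = det2 (b - a) (c - a)"

lemma vec2_eq_iff: "(x::real^2) = y \<longleftrightarrow> x$1 = y$1 \<and> x$2 = y$2"
  by (simp add: vec_eq_iff forall_2)

lemma inner_vec2: "(x::real^2) \<bullet> y = x$1 * y$1 + x$2 * y$2"
  by (simp add: inner_vec_def sum_2)

lemma orient_swap: "orient a b c = - orient b a c"
  by (simp add: orient_def det2_def algebra_simps)

lemma orient_swap': "orient a b c = - orient a c b"
  by (simp add: orient_def det2_def algebra_simps)

lemma orient_rotate: "orient a b c = orient b c a"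
  by (simp add: orient_def det2_def algebra_simps)

lemma orient_self [simp]: "orient a b a = 0" "orient a b b = 0"
  by (simp_all add: orient_def det2_def)

lemma det2_eq_0_imp_parallel:
  assumes "det2 x y = 0" "x \<noteq> 0"
  shows "\<exists>k. y = k *\<^sub>R x"
proof (cases "x$1 = 0")
  case True
  then have "x$2 \<noteq> 0" using assms(2) by (simp add: vec2_eq_iff)
  then show ?thesis
    using assms(1) True by (intro exI[of _ "y$2 / x$2"]) (simp add: vec2_eq_iff det2_def)
next
  case False
  then show ?thesis
    using assms(1) by (intro exI[of _ "y$1 / x$1"]) (simp add: vec2_eq_iff det2_def field_simps)
qed

lemma orient_eq_0_imp_collinear:
  assumes "orient a b c = 0" "a \<noteq> b"
  shows "collinear {a, b, c}"
proof -
  have "collinear {0, b - a, c - a}"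
    using det2_eq_0_imp_parallel assms by (simp add: orient_def collinear_lemma)
  moreover have "{a, b, c} = {b, a, c}" by auto
  ultimately show ?thesis by (simp add: collinear_3)
qed

lemma general_position_orient_nonzero:
  assumes "general_position P" "a \<in> P" "b \<in> P" "c \<in> P" "a \<noteq> b" "a \<noteq> c" "b \<noteq> c"
  shows "orient a b c \<noteq> 0"
  using assms orient_eq_0_imp_collinear unfolding general_position_def by blast

lemma det2_cyclic_dependence: "det2 a b *\<^sub>R c + det2 b c *\<^sub>R a + det2 c a *\<^sub>R b = 0"
  by (simp add: vec2_eq_iff det2_def algebra_simps)

lemma inner_eq_0_if_positive_dependence:
  fixes a b c u :: "'a::real_inner"
  assumes "\<alpha> *\<^sub>R a + \<beta> *\<^sub>R b + \<gamma> *\<^sub>R c = 0" "0 < \<alpha>" "0 < \<beta>" "0 < \<gamma>"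
    and "u \<bullet> a \<le> 0" "u \<bullet> b \<le> 0" "u \<bullet> c \<le> 0"
  shows "u \<bullet> a = 0" "u \<bullet> b = 0"
proof -
  have "\<alpha> * (u \<bullet> a) + \<beta> * (u \<bullet> b) + \<gamma> * (u \<bullet> c) = 0"
    using arg_cong[OF assms(1), of "inner u"] by (simp add: inner_add_right)
  moreover have "\<alpha> * (u \<bullet> a) \<le> 0" "\<beta> * (u \<bullet> b) \<le> 0" "\<gamma> * (u \<bullet> c) \<le> 0"
    using assms(2-7) by (simp_all add: mult_nonneg_nonpos)
  ultimately show "u \<bullet> a = 0" "u \<bullet> b = 0"
    using assms(2,3) by (simp_all add: mult_nonpos_nonpos add_nonpos_eq_0_iff)
qed

lemma det2_nonzero_inner_eq_0:
  assumes "det2 a b \<noteq> 0" "u \<bullet> a = 0" "u \<bullet> b = 0"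
  shows "u = 0"
proof -
  have "u$1 * det2 a b = b$2 * (u \<bullet> a) - a$2 * (u \<bullet> b)"
    and "u$2 * det2 a b = a$1 * (u \<bullet> b) - b$1 * (u \<bullet> a)"
    by (simp_all add: inner_vec2 det2_def algebra_simps)
  then show ?thesis using assms by (simp add: vec2_eq_iff)
qed

text \<open>Three vectors turning positively in cyclic order span the plane positively, so no closed
  half-plane through the origin contains all of them.\<close>
lemma positive_cycle_not_in_halfplane:
  assumes "0 < det2 a b" "0 < det2 b c" "0 < det2 c a"
    and "u \<bullet> a \<le> 0" "u \<bullet> b \<le> 0" "u \<bullet> c \<le> 0"
  shows "u = 0"
proof -
  have "u \<bullet> a = 0" "u \<bullet> b = 0"
    using inner_eq_0_if_positive_dependence[OF det2_cyclic_dependence[of b c a]] assms by auto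
  with assms(1) show ?thesis using det2_nonzero_inner_eq_0[of a b u] by simp
qed

definition supporting :: "(real^2) set \<Rightarrow> real^2 \<Rightarrow> bool" where
  "supporting P h \<longleftrightarrow> h \<in> P \<and> (\<exists>u. u \<noteq> 0 \<and> (\<forall>q\<in>P. u \<bullet> q \<le> u \<bullet> h))"

definition hull_edge :: "(real^2) set \<Rightarrow> real^2 \<Rightarrow> real^2 \<Rightarrow> bool" where
  "hull_edge P a b \<longleftrightarrow> a \<in> P \<and> b \<in> P \<and> a \<noteq> b \<and> (\<forall>q\<in>P - {a, b}. 0 < orient a b q)"

lemma supporting_if_frontier_convex_hull:
  assumes "h \<in> P" "h \<in> frontier (convex hull P)"
  shows "supporting P h"
proof (cases "interior (convex hull P) = {}")
  case True
  then obtain a b where "a \<noteq> 0" "convex hull P \<subseteq> {x. a \<bullet> x = b}"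
    using empty_interior_subset_hyperplane[OF convex_convex_hull] by blast
  moreover have "P \<subseteq> convex hull P" by (rule hull_subset)
  ultimately have "\<forall>q\<in>P. a \<bullet> q = b" by blast
  then have "\<forall>q\<in>P. a \<bullet> q \<le> a \<bullet> h" using assms(1) by simp
  with \<open>a \<noteq> 0\<close> show ?thesis using assms(1) unfolding supporting_def by blast
next
  case False
  then have "h \<in> closure (convex hull P)" "h \<notin> rel_interior (convex hull P)"
    using assms(2) rel_interior_nonempty_interior by (auto simp: frontier_def)
  then obtain a where "a \<noteq> 0" "\<And>y. y \<in> closure (convex hull P) \<Longrightarrow> a \<bullet> h \<le> a \<bullet> y"
    using supporting_hyperplane_relative_frontier[OF convex_convex_hull] by metis
  then have "-a \<noteq> 0" "\<forall>q\<in>P. (-a) \<bullet> q \<le> (-a) \<bullet> h"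
    using hull_subset[of P convex] closure_subset by fastforce+
  then show ?thesis using assms(1) unfolding supporting_def by blast
qed

text \<open>Around a supporting point h, the relation ``q lies to the left of the ray from h through p''
  is transitive, because all rays from h lie in a closed half-plane.\<close>
lemma orient_trans_at_supporting:
  assumes "general_position P" "h \<in> P" "u \<noteq> 0" "\<forall>q\<in>P. u \<bullet> q \<le> u \<bullet> h"
    and "a \<in> P - {h}" "b \<in> P - {h}" "c \<in> P - {h}" "a \<noteq> c"
    and "0 < orient h a b" "0 < orient h b c"
  shows "0 < orient h a c"
proof (rule ccontr)
  assume "\<not> 0 < orient h a c"
  moreover have "orient h a c \<noteq> 0"
    using general_position_orient_nonzero[OF assms(1,2), of a c] assms(5,7,8) by auto
  ultimately have "0 < det2 (c - h) (a - h)"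
    using orient_swap'[of h a c] unfolding orient_def by linarith
  moreover have "0 < det2 (a - h) (b - h)" "0 < det2 (b - h) (c - h)"
    using assms(9,10) unfolding orient_def .
  moreover have "u \<bullet> (x - h) \<le> 0" if "x \<in> P" for x
    using assms(4) that by (simp add: inner_diff_right)
  ultimately have "u = 0"
    using positive_cycle_not_in_halfplane assms(5-7) by blast
  with assms(3) show False ..
qed

lemma hull_edge_exists:
  assumes "finite P" "general_position P" "supporting P h" "P - {h} \<noteq> {}"
  shows "\<exists>b. hull_edge P h b"
proof -
  obtain u where h: "h \<in> P" and u: "u \<noteq> 0" "\<forall>q\<in>P. u \<bullet> q \<le> u \<bullet> h"
    using assms(3) unfolding supporting_def by blast
  let ?R = "\<lambda>p q. 0 < orient h p q"
  have "asymp_on (P - {h}) ?R"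
  proof (rule asymp_onI)
    fix p q assume "?R p q"
    then show "\<not> ?R q p" using orient_swap'[of h p q] by linarith
  qed
  moreover have "transp_on (P - {h}) ?R"
  proof (rule transp_onI)
    fix p q r assume "p \<in> P - {h}" "q \<in> P - {h}" "r \<in> P - {h}" and "?R p q" "?R q r"
    moreover have "p \<noteq> r"
    proof
      assume "p = r"
      with \<open>?R q r\<close> have "?R q p" by simp
      with \<open>?R p q\<close> show False using orient_swap'[of h p q] by linarith
    qed
    ultimately show "?R p r" using orient_trans_at_supporting[OF assms(2) h u] by blast
  qed
  ultimately obtain b where b: "b \<in> P - {h}" and min: "\<forall>q\<in>P - {h}. q \<noteq> b \<longrightarrow> \<not> ?R q b"
    using Finite_Set.bex_min_element[of "P - {h}" ?R] assms(1,4) by blast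
  have "0 < orient h b q" if q: "q \<in> P - {h, b}" for q
  proof -
    have "\<not> 0 < orient h q b" using min q by blast
    moreover have "orient h b q \<noteq> 0"
      using general_position_orient_nonzero[OF assms(2) h, of b q] b q by auto
    ultimately show ?thesis using orient_swap'[of h q b] by linarith
  qed
  then show ?thesis using b h unfolding hull_edge_def by blast
qed

lemma hull_edge_unique: "hull_edge P a b \<Longrightarrow> hull_edge P a c \<Longrightarrow> b = c"
  unfolding hull_edge_def using orient_swap'[of a b c] by force

lemma hull_edge_source_unique: "hull_edge P a b \<Longrightarrow> hull_edge P a' b \<Longrightarrow> a = a'"
  unfolding hull_edge_def using orient_rotate[of a' b a] orient_swap[of b a a'] by force

lemma hull_edge_pred_ne_succ:
  assumes "3 \<le> card P" "hull_edge P a b" "hull_edge P b c"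
  shows "a \<noteq> c"
proof
  assume "a = c"
  with assms(2,3) have "P \<subseteq> {a, b}"
    unfolding hull_edge_def using orient_swap[of a b] by force
  then have "card P \<le> card {a, b}" by (simp add: card_mono)
  also have "\<dots> \<le> 2" by (simp add: card_insert_if)
  finally show False using assms(1) by simp
qed

lemma supporting_if_hull_edge:
  assumes "hull_edge P a b"
  shows "supporting P b"
proof -
  define u :: "real^2" where "u = (\<chi> i. if i = 1 then (b - a)$2 else - (b - a)$1)"
  have u_components: "u$1 = (b - a)$2" "u$2 = - (b - a)$1" by (simp_all add: u_def)
  have u_orient: "u \<bullet> (q - a) = - orient a b q" for q
    by (simp add: inner_vec2 u_components orient_def det2_def algebra_simps)
  have "a \<noteq> b" using assms by (simp add: hull_edge_def)
  then have "u \<noteq> 0" by (auto simp: vec2_eq_iff u_components)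
  moreover have "u \<bullet> q \<le> u \<bullet> b" if "q \<in> P" for q
  proof -
    have "0 \<le> orient a b q"
      using assms that unfolding hull_edge_def by (cases "q \<in> {a, b}") (auto intro: less_imp_le)
    then show ?thesis using u_orient[of q] u_orient[of b] by (simp add: inner_diff_right)
  qed
  ultimately show ?thesis using assms unfolding supporting_def hull_edge_def by blast
qed

lemma hull_edge_disjoint_closed_segment:
  assumes "hull_edge P a b" "p \<in> P - {a, b}" "q \<in> P - {a, b}"
  shows "closed_segment a b \<inter> closed_segment p q = {}"
proof -
  have "orient a b v = 0" if v: "v \<in> closed_segment a b" for v
  proof -
    obtain t where t: "v = (1 - t) *\<^sub>R a + t *\<^sub>R b"
      using v unfolding in_segment by blast
    show ?thesis unfolding t by (simp add: orient_def det2_def algebra_simps)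
  qed
  moreover have "0 < orient a b v" if v: "v \<in> closed_segment p q" for v
  proof -
    obtain t where t: "0 \<le> t" "t \<le> 1" "v = (1 - t) *\<^sub>R p + t *\<^sub>R q"
      using v unfolding in_segment by blast
    have "orient a b v = (1 - t) * orient a b p + t * orient a b q"
      unfolding t(3) by (simp add: orient_def det2_def algebra_simps)
    moreover have "0 < orient a b p" "0 < orient a b q"
      using assms unfolding hull_edge_def by auto
    ultimately show ?thesis
      using t(1,2) by (cases "t = 0") (auto intro: add_nonneg_pos)
  qed
  ultimately show ?thesis by force
qed

definition hull_next :: "(real^2) set \<Rightarrow> real^2 \<Rightarrow> real^2" where
  "hull_next P a = (THE b. hull_edge P a b)"

lemma hull_edge_hull_next:
  assumes "finite P" "general_position P" "supporting P a" "2 \<le> card P"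
  shows "hull_edge P a (hull_next P a)"
proof -
  have "P - {a} \<noteq> {}"
    using assms(4) card_mono[of "{a}" P] by auto
  then obtain b where b: "hull_edge P a b"
    using hull_edge_exists[OF assms(1-3)] by blast
  show ?thesis
    unfolding hull_next_def by (rule theI[of _ b]) (use b hull_edge_unique in blast)+
qed

lemma hull_edge_hull_walk:
  assumes "finite P" "general_position P" "supporting P h" "2 \<le> card P"
  shows "hull_edge P ((hull_next P ^^ k) h) ((hull_next P ^^ Suc k) h)"
proof -
  have "supporting P ((hull_next P ^^ k) h)"
  proof (induction k)
    case (Suc k)
    then show ?case
      using supporting_if_hull_edge[OF hull_edge_hull_next[OF assms(1,2) Suc.IH assms(4)]] by simp
  qed (simp add: assms(3))
  then show ?thesis using hull_edge_hull_next[OF assms(1,2) _ assms(4)] by simp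
qed

lemma hull_walk_returns_to_start:
  assumes "finite P" "general_position P" "supporting P h" "2 \<le> card P"
    and "(hull_next P ^^ (j + d)) h = (hull_next P ^^ j) h"
  shows "(hull_next P ^^ d) h = h"
  using assms(5)
proof (induction j)
  case (Suc j)
  have "hull_edge P ((hull_next P ^^ (j + d)) h) ((hull_next P ^^ (Suc j)) h)"
    using hull_edge_hull_walk[OF assms(1-4), of "j + d"] Suc.prems by simp
  then have "(hull_next P ^^ (j + d)) h = (hull_next P ^^ j) h"
    using hull_edge_source_unique hull_edge_hull_walk[OF assms(1-4), of j] by blast
  then show ?case by (rule Suc.IH)
qed simp

text \<open>Otherwise the vectors c2 - c, c1 - c and c - h would turn positively in cyclic order while
  lying in the half-plane u \<le> 0.\<close>
lemma maximiser_near_local_maximum: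
  assumes "hull_edge P c1 c" "hull_edge P c c2" "c1 \<noteq> c2" "u \<noteq> 0"
    and "u \<bullet> c1 \<le> u \<bullet> c" "u \<bullet> c2 \<le> u \<bullet> c" "h \<in> P" "\<forall>q\<in>P. u \<bullet> q \<le> u \<bullet> h"
  shows "h \<in> {c1, c, c2}"
proof (rule ccontr)
  assume "h \<notin> {c1, c, c2}"
  have "c1 \<noteq> c" using assms(1) by (simp add: hull_edge_def)
  have "0 < det2 (c2 - c) (c1 - c)"
    using assms(1-3) \<open>c1 \<noteq> c\<close> unfolding hull_edge_def orient_def by auto
  moreover have "0 < det2 (c1 - c) (c - h)"
  proof -
    have "0 < orient c1 c h" using assms(1,7) \<open>h \<notin> {c1, c, c2}\<close> by (simp add: hull_edge_def)
    then show ?thesis by (simp add: orient_def det2_def algebra_simps)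
  qed
  moreover have "0 < det2 (c - h) (c2 - c)"
  proof -
    have "0 < orient c c2 h" using assms(2,7) \<open>h \<notin> {c1, c, c2}\<close> by (simp add: hull_edge_def)
    then show ?thesis by (simp add: orient_def det2_def algebra_simps)
  qed
  moreover have "u \<bullet> (c2 - c) \<le> 0" "u \<bullet> (c1 - c) \<le> 0" "u \<bullet> (c - h) \<le> 0"
    using assms(2,5,6,8) by (simp_all add: hull_edge_def inner_diff_right)
  ultimately have "u = 0" by (rule positive_cycle_not_in_halfplane)
  with assms(4) show False ..
qed

lemma supporting_in_periodic_hull_walk:
  assumes "finite P" "general_position P" "supporting P h0" "3 \<le> card P"
    and "0 < d" "(hull_next P ^^ d) h0 = h0" and "supporting P h"
  shows "h \<in> (\<lambda>k. (hull_next P ^^ k) h0) ` {..<d}"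
proof -
  define z where "z k = (hull_next P ^^ k) h0" for k
  have z_mod: "z k = z (k mod d)" for k
    unfolding z_def using funpow_mod_eq[OF assms(6)] by simp
  have on_walk: "z k \<in> z ` {..<d}" for k
    using z_mod[of k] assms(5) by simp
  have edge: "hull_edge P (z k) (z (Suc k))" for k
    unfolding z_def using hull_edge_hull_walk[OF assms(1-3)] assms(4) by simp
  obtain u where "h \<in> P" "u \<noteq> 0" "\<forall>q\<in>P. u \<bullet> q \<le> u \<bullet> h"
    using assms(7) unfolding supporting_def by blast
  define m where "m = Max ((\<lambda>k. u \<bullet> z k) ` {..<d})"
  have "m \<in> (\<lambda>k. u \<bullet> z k) ` {..<d}"
    unfolding m_def using assms(5) by (intro Max_in) auto
  then obtain i where "i < d" "u \<bullet> z i = m" by auto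
  have z_max: "u \<bullet> z k \<le> u \<bullet> z i" for k
    using z_mod[of k] assms(5) \<open>u \<bullet> z i = m\<close> unfolding m_def by (simp add: Max_ge)
  have "Suc (i + d - 1) = i + d" using assms(5) by simp
  then have "z (Suc (i + d - 1)) = z i"
    using z_mod[of "i + d"] \<open>i < d\<close> by simp
  then have "hull_edge P (z (i + d - 1)) (z i)" using edge[of "i + d - 1"] by simp
  then have "h \<in> {z (i + d - 1), z i, z (Suc i)}"
    using maximiser_near_local_maximum edge[of i] z_max hull_edge_pred_ne_succ[OF assms(4)]
      \<open>h \<in> P\<close> \<open>u \<noteq> 0\<close> \<open>\<forall>q\<in>P. u \<bullet> q \<le> u \<bullet> h\<close> by blast
  then show ?thesis using on_walk unfolding z_def by blast
qed

lemma inj_on_hull_walk: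
  assumes "finite P" "general_position P" "supporting P h0" "3 \<le> card P"
  shows "inj_on (\<lambda>k. (hull_next P ^^ k) h0) {..<card (Collect (supporting P))}"
proof (rule linorder_inj_onI')
  fix i j assume "i \<in> {..<card (Collect (supporting P))}" "j \<in> {..<card (Collect (supporting P))}"
    and "i < j"
  show "(hull_next P ^^ i) h0 \<noteq> (hull_next P ^^ j) h0"
  proof
    assume "(hull_next P ^^ i) h0 = (hull_next P ^^ j) h0"
    then have "(hull_next P ^^ (j - i)) h0 = h0"
      using hull_walk_returns_to_start[OF assms(1-3), of i "j - i"] assms(4) \<open>i < j\<close> by simp
    then have "Collect (supporting P) \<subseteq> (\<lambda>k. (hull_next P ^^ k) h0) ` {..<j - i}"
      using supporting_in_periodic_hull_walk[OF assms] \<open>i < j\<close> by auto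
    then have "card (Collect (supporting P)) \<le> card ((\<lambda>k. (hull_next P ^^ k) h0) ` {..<j - i})"
      by (rule card_mono[rotated]) simp
    also have "\<dots> \<le> j - i"
      using card_image_le[of "{..<j - i}" "\<lambda>k. (hull_next P ^^ k) h0"] by simp
    finally show False using \<open>j \<in> {..<card (Collect (supporting P))}\<close> by auto
  qed
qed

lemma walk_length_ge_2:
  assumes "walk V E xs" "hd xs = x" "last xs = y" "x \<noteq> y"
  shows "2 \<le> length xs"
proof -
  have "xs \<noteq> []" using assms(1) by (simp add: walk_def)
  moreover have "length xs \<noteq> 1"
  proof
    assume "length xs = 1"
    then obtain a where "xs = [a]" by (auto simp: length_Suc_conv)
    with assms(2-4) show False by simp
  qed
  ultimately show ?thesis by (cases "length xs") auto
qed

lemma walk_length_2_imp_adj: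
  assumes "walk V E xs" "hd xs = x" "last xs = y" "length xs = 2"
  shows "E x y"
proof -
  have "xs \<noteq> []" using assms(4) by auto
  then have "xs ! 0 = x" "xs ! 1 = y"
    using assms(2-4) hd_conv_nth[of xs] last_conv_nth[of xs] by simp_all
  moreover have "E (xs ! 0) (xs ! 1)" using assms(1,4) unfolding walk_def by simp
  ultimately show ?thesis by simp
qed

lemma shortest_path_adj:
  assumes "x \<in> V" "y \<in> V" "x \<noteq> y" "E x y"
  shows "shortest_path V E x y [x, y]"
  unfolding shortest_path_def
proof (intro conjI allI impI)
  show "walk V E [x, y]"
    using assms by (auto simp: walk_def less_Suc_eq)
  fix ys assume "walk V E ys \<and> hd ys = x \<and> last ys = y"
  then show "length [x, y] \<le> length ys"
    using walk_length_ge_2[of V E ys x y] assms(3) by simp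
qed simp_all

lemma shortest_path_common_neighbour:
  assumes "x \<in> V" "y \<in> V" "w \<in> V" "x \<noteq> y" "\<not> E x y" "E x w" "E w y"
  shows "shortest_path V E x y [x, w, y]"
  unfolding shortest_path_def
proof (intro conjI allI impI)
  show "walk V E [x, w, y]"
    using assms by (auto simp: walk_def less_Suc_eq nth_Cons split: nat.splits)
  fix ys assume ys: "walk V E ys \<and> hd ys = x \<and> last ys = y"
  have "2 \<le> length ys" using ys walk_length_ge_2[of V E ys x y] assms(4) by blast
  moreover have "length ys \<noteq> 2" using ys walk_length_2_imp_adj[of V E ys x y] assms(5) by blast
  ultimately show "length [x, w, y] \<le> length ys" by simp
qed simp_all

lemma mv_set_Diff_if_common_neighbours:
  assumes "W \<subseteq> V"
    and "\<And>x y. x \<in> V - W \<Longrightarrow> y \<in> V - W \<Longrightarrow> x \<noteq> y \<Longrightarrow> \<not> E x y \<Longrightarrow> \<exists>w\<in>W. E x w \<and> E w y"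
  shows "mv_set V E (V - W)"
  unfolding mv_set_def
proof (intro conjI ballI impI)
  show "V - W \<subseteq> V" by blast
  fix x y assume x: "x \<in> V - W" and y: "y \<in> V - W" and "x \<noteq> y"
  show "mutually_visible V E (V - W) x y"
  proof (cases "E x y")
    case True
    have "shortest_path V E x y [x, y]"
      using shortest_path_adj[of x V y E] x y \<open>x \<noteq> y\<close> True by blast
    then show ?thesis unfolding mutually_visible_def by (intro exI[of _ "[x, y]"]) simp
  next
    case False
    obtain w where w: "w \<in> W" "E x w" "E w y"
      using assms(2)[OF x y \<open>x \<noteq> y\<close> False] by blast
    have "shortest_path V E x y [x, w, y]"
      using shortest_path_common_neighbour[of x V y w E] x y w assms(1) \<open>x \<noteq> y\<close> False by blast
    with \<open>w \<in> W\<close> show ?thesis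
      unfolding mutually_visible_def by (intro exI[of _ "[x, w, y]"]) simp
  qed
qed

lemma card_le_mu:
  assumes "finite V" "mv_set V E U"
  shows "card U \<le> mu V E"
proof -
  have "{U. mv_set V E U} \<subseteq> Pow V" unfolding mv_set_def by auto
  then have "finite {U. mv_set V E U}" using assms(1) finite_subset by blast
  then show ?thesis unfolding mu_def using assms(2) by (intro Max_ge) auto
qed

lemma seg_vertices_eq_image:
  "seg_vertices P = (\<lambda>S. convex hull S) ` {S. S \<subseteq> P \<and> card S = 2}"
  unfolding seg_vertices_def by (auto simp: card_2_iff segment_convex_hull)

lemma finite_seg_vertices: "finite P \<Longrightarrow> finite (seg_vertices P)"
  unfolding seg_vertices_eq_image by simp

lemma card_seg_vertices:
  assumes "finite P"
  shows "card (seg_vertices P) = card P choose 2"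
proof -
  have "inj_on (\<lambda>S. convex hull S) {S. S \<subseteq> P \<and> card S = 2}"
    by (rule inj_onI) (auto simp: card_2_iff simp flip: segment_convex_hull)
  then show ?thesis
    unfolding seg_vertices_eq_image by (simp add: card_image n_subsets[OF assms])
qed

lemma ex_pair_avoiding_small_set:
  fixes z :: "nat \<Rightarrow> 'a"
  assumes "inj_on z {..<2 * n}" "finite X" "card X < n"
  shows "\<exists>i<n. z (2 * i) \<notin> X \<and> z (Suc (2 * i)) \<notin> X"
proof (rule ccontr)
  assume no_pair: "\<not> ?thesis"
  define g where "g i = (if z (2 * i) \<in> X then 2 * i else Suc (2 * i))" for i
  have "z (g i) \<in> X" if "i < n" for i
    using no_pair that unfolding g_def by auto
  moreover have "inj_on (z \<circ> g) {..<n}"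
  proof (rule inj_onI)
    fix i j assume "i \<in> {..<n}" "j \<in> {..<n}" "(z \<circ> g) i = (z \<circ> g) j"
    then have "g i = g j" using assms(1) unfolding g_def by (auto dest: inj_onD)
    moreover have "g i div 2 = i" "g j div 2 = j" unfolding g_def by auto
    ultimately show "i = j" by metis
  qed
  ultimately have "n \<le> card X"
    using card_inj_on_le[of "z \<circ> g" "{..<n}" X] assms(2) by auto
  with assms(3) show False by simp
qed

lemma mv_set_seg_vertices_Diff_hull_matching:
  assumes "inj_on z {..<2 * n}" "4 < n" "\<And>i. i < n \<Longrightarrow> hull_edge P (z (2 * i)) (z (Suc (2 * i)))"
  shows "mv_set (seg_vertices P) seg_adj
           (seg_vertices P - (\<lambda>i. closed_segment (z (2 * i)) (z (Suc (2 * i)))) ` {..<n})"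
    (is "mv_set _ _ (_ - ?W)")
proof (rule mv_set_Diff_if_common_neighbours)
  show "?W \<subseteq> seg_vertices P"
  proof (rule image_subsetI)
    fix i assume "i \<in> {..<n}"
    then have "hull_edge P (z (2 * i)) (z (Suc (2 * i)))" using assms(3) by simp
    then show "closed_segment (z (2 * i)) (z (Suc (2 * i))) \<in> seg_vertices P"
      unfolding hull_edge_def seg_vertices_def by blast
  qed
  fix x y assume "x \<in> seg_vertices P - ?W" "y \<in> seg_vertices P - ?W"
  then obtain p1 q1 p2 q2 where x: "x = closed_segment p1 q1" "p1 \<in> P" "q1 \<in> P"
    and y: "y = closed_segment p2 q2" "p2 \<in> P" "q2 \<in> P"
    unfolding seg_vertices_def by blast
  have "card {p1, q1, p2, q2} < n"
    using card_length[of "[p1, q1, p2, q2]"] assms(2) by simp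
  then have "\<exists>i<n. z (2 * i) \<notin> {p1, q1, p2, q2} \<and> z (Suc (2 * i)) \<notin> {p1, q1, p2, q2}"
    by (intro ex_pair_avoiding_small_set[OF assms(1)]) simp_all
  then obtain i where i: "i < n" "z (2 * i) \<notin> {p1, q1, p2, q2}" "z (Suc (2 * i)) \<notin> {p1, q1, p2, q2}"
    by blast
  let ?e = "closed_segment (z (2 * i)) (z (Suc (2 * i)))"
  have edge: "hull_edge P (z (2 * i)) (z (Suc (2 * i)))" using assms(3) i(1) .
  have "?e \<inter> x = {}"
    unfolding x(1) by (rule hull_edge_disjoint_closed_segment[OF edge]) (use i x in auto)
  moreover have "?e \<inter> y = {}"
    unfolding y(1) by (rule hull_edge_disjoint_closed_segment[OF edge]) (use i y in auto)
  ultimately have "seg_adj x ?e" "seg_adj ?e y"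
    unfolding seg_adj_def by blast+
  with i(1) show "\<exists>w\<in>?W. seg_adj x w \<and> seg_adj w y" by blast
qed

lemma injective_hull_walk:
  assumes "finite P" "general_position P" "3 \<le> card (P \<inter> frontier (convex hull P))"
  obtains z where "inj_on z {..<card (P \<inter> frontier (convex hull P))}"
    and "\<And>k. hull_edge P (z k) (z (Suc k))"
proof -
  let ?H = "P \<inter> frontier (convex hull P)"
  have "?H \<subseteq> Collect (supporting P)" "Collect (supporting P) \<subseteq> P"
    using supporting_if_frontier_convex_hull by (auto simp: supporting_def)
  then have "card ?H \<le> card (Collect (supporting P))" "card (Collect (supporting P)) \<le> card P"
    using assms(1) by (auto intro: card_mono finite_subset)
  then have "3 \<le> card P" using assms(3) by linarith
  have "?H \<noteq> {}"
  proof
    assume "?H = {}"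
    with assms(3) show False by simp
  qed
  then obtain h0 where "h0 \<in> ?H" by blast
  then have h0: "supporting P h0" using supporting_if_frontier_convex_hull by blast
  show thesis
  proof
    show "inj_on (\<lambda>k. (hull_next P ^^ k) h0) {..<card ?H}"
      by (rule inj_on_subset[OF inj_on_hull_walk[OF assms(1,2) h0 \<open>3 \<le> card P\<close>]])
        (use \<open>card ?H \<le> card (Collect (supporting P))\<close> in auto)
    show "hull_edge P ((hull_next P ^^ k) h0) ((hull_next P ^^ Suc k) h0)" for k
      using hull_edge_hull_walk[OF assms(1,2) h0] \<open>3 \<le> card P\<close> by simp
  qed
qed

theorem lemma18:
  fixes P :: "(real^2) set"
  assumes "finite P"
    and "general_position P"
    and "card (P \<inter> frontier (convex hull P)) \<ge> 10"
  shows "int (mu (seg_vertices P) seg_adj) \<ge> int (card P choose 2) - 5"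
proof -
  have "3 \<le> card (P \<inter> frontier (convex hull P))" using assms(3) by simp
  then obtain z where inj: "inj_on z {..<card (P \<inter> frontier (convex hull P))}"
    and edge: "\<And>k. hull_edge P (z k) (z (Suc k))"
    using injective_hull_walk[OF assms(1,2)] by blast
  define W where "W = (\<lambda>i. closed_segment (z (2 * i)) (z (Suc (2 * i)))) ` {..<5}"
  have "inj_on z {..<2 * 5}"
    by (rule inj_on_subset[OF inj]) (use assms(3) in auto)
  then have "mv_set (seg_vertices P) seg_adj (seg_vertices P - W)"
    unfolding W_def by (rule mv_set_seg_vertices_Diff_hull_matching) (simp_all add: edge)
  then have "card (seg_vertices P - W) \<le> mu (seg_vertices P) seg_adj"
    by (rule card_le_mu[OF finite_seg_vertices[OF assms(1)]])
  moreover have "card (seg_vertices P) - card W \<le> card (seg_vertices P - W)"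
    by (rule diff_card_le_card_Diff) (simp add: W_def)
  moreover have "card W \<le> card {..<5::nat}"
    unfolding W_def by (rule card_image_le) simp
  ultimately have "card P choose 2 \<le> mu (seg_vertices P) seg_adj + 5"
    using card_seg_vertices[OF assms(1)] by simp
  then show ?thesis by linarith
qed

end
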